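(* Let $\beta,\gamma>0$, $\tilde S$, $\tilde R$ and $N>0$ be real numbers satisfying $\tilde R\ge 0$ and $N>\tilde S e^{(\beta/\gamma)\tilde R}+\tilde R$. Then the transcendental equation \[ x=N-\tilde S e^{(\beta/\gamma)\tilde R}e^{-(\beta/\gamma)x} \] has a unique solution $x=\alpha$ such that $\tilde R<\alpha<N$.
   Context: In the paper $N=\tilde S+\tilde E+\tilde I+\tilde R$ with $\tilde S,\tilde E,\tilde I,\tilde R$ the initial values of an SEIR model, and the standing assumptions $\tilde I>0$, $\tilde E>(\gamma/\delta)\tilde I$, $\tilde S>\delta\tilde E/(\beta\tilde I)$ (for a constant $\delta>0$) are in force; in particular $\tilde S>0$. *)

theory Defs
  imports Complex_Main
begin

end

theory Submission
  imports Defs "HOL-Analysis.Analysis"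
begin

text \<open>With \<open>k = \<beta>/\<gamma>\<close> and \<open>C = S e\<^bsup>kR\<^esup>\<close>, the solutions are the zeros of the convex function
  \<open>f x = x - N + C e\<^bsup>-kx\<^esup>\<close>. Since \<open>C e\<^bsup>-kR\<^esup> = S \<le> C\<close>, the hypothesis gives \<open>f R = R + S - N < 0\<close>,
  while \<open>f N = C e\<^bsup>-kN\<^esup> > 0\<close>; the intermediate value theorem yields a zero in \<open>(R, N)\<close>.
  A convex function that is negative at \<open>R\<close> lies below the chord from \<open>R\<close> to any zero \<open>y > R\<close>,
  hence is negative on \<open>(R, y)\<close>, so it has at most one zero to the right of \<open>R\<close>.\<close>

lemma convex_on_exp_mult: "convex_on UNIV (\<lambda>x. exp (c * x :: real))"
  by (rule f''_ge0_imp_convex[where f' = "\<lambda>x. c * exp (c * x)" and f'' = "\<lambda>x. c\<^sup>2 * exp (c * x)"])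
     (auto intro!: derivative_eq_intros simp: power2_eq_square)

lemma IVT_zero_strict:
  fixes f :: "real \<Rightarrow> real"
  assumes "a \<le> b" "continuous_on {a..b} f" "f a < 0" "0 < f b"
  shows "\<exists>x. a < x \<and> x < b \<and> f x = 0"
proof -
  obtain x where "a \<le> x" "x \<le> b" "f x = 0"
    using IVT'[of f a 0 b] assms by fastforce
  with assms show ?thesis
    by (metis order.order_iff_strict less_irrefl)
qed

lemma convex_on_negative_zero_unique:
  fixes f :: "real \<Rightarrow> real"
  assumes convex: "convex_on S f" and "a \<in> S" "f a < 0"
    and "x \<in> S" "y \<in> S" "a < x" "a < y" "f x = 0" "f y = 0"
  shows "x = y"
proof -
  have False if xy: "a < x" "x < y" "y \<in> S" "f x = 0" "f y = 0" for x y
  proof -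
    define t where "t = (x - a) / (y - a)"
    have t: "0 < t" "t < 1"
      using xy by (auto simp: t_def field_simps)
    have "t * (y - a) = x - a"
      using xy by (simp add: t_def)
    then have "x = (1 - t) *\<^sub>R a + t *\<^sub>R y"
      by (simp add: algebra_simps)
    then have "f x \<le> (1 - t) * f a + t * f y"
      using convex_onD[OF convex, of t a y] t \<open>a \<in> S\<close> \<open>y \<in> S\<close> by simp
    also have "\<dots> < 0"
      using t \<open>f a < 0\<close> \<open>f y = 0\<close> by (simp add: mult_pos_neg)
    finally show False
      using \<open>f x = 0\<close> by simp
  qed
  then show ?thesis
    using assms by (metis linorder_neqE_linordered_idom)
qed

theorem lemma6:
  fixes \<beta> \<gamma> S R N :: real
  assumes "\<beta> > 0" and "\<gamma> > 0" and "S > 0" and "N > 0"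
    and "R \<ge> 0"
    and "N > S * exp ((\<beta> / \<gamma>) * R) + R"
  shows "\<exists>!\<alpha>. R < \<alpha> \<and> \<alpha> < N \<and>
           \<alpha> = N - S * exp ((\<beta> / \<gamma>) * R) * exp (- (\<beta> / \<gamma>) * \<alpha>)"
proof -
  define k where "k = \<beta> / \<gamma>"
  define C where "C = S * exp (k * R)"
  define f where "f x = x - N + C * exp (- k * x)" for x
  have "k > 0" "C > 0"
    using assms by (simp_all add: k_def C_def)
  have root_iff: "\<alpha> = N - C * exp (- k * \<alpha>) \<longleftrightarrow> f \<alpha> = 0" for \<alpha>
    by (auto simp: f_def)
  have "C * exp (- k * R) = S"
    by (simp add: C_def exp_minus)
  moreover have "S \<le> C"
    using assms \<open>k > 0\<close> by (simp add: C_def)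
  moreover have N_gt: "C + R < N"
    using assms by (simp add: C_def k_def)
  ultimately have fR: "f R < 0"
    by (simp add: f_def)
  have fN: "f N > 0"
    using \<open>C > 0\<close> by (simp add: f_def)
  have "continuous_on {R..N} f"
    unfolding f_def by (intro continuous_intros)
  moreover have "R \<le> N"
    using N_gt \<open>C > 0\<close> by simp
  ultimately have root_exists: "\<exists>a. R < a \<and> a < N \<and> f a = 0"
    using fR fN by (intro IVT_zero_strict)
  have "convex_on UNIV f"
    unfolding f_def
    by (intro convex_on_add convex_on_diff convex_on_cmul convex_on_exp_mult \<open>C > 0\<close>[THEN less_imp_le])
       (simp_all add: convex_on_ident concave_on_const)
  then have "\<exists>!\<alpha>. R < \<alpha> \<and> \<alpha> < N \<and> f \<alpha> = 0"
    using root_exists fR by (intro ex_ex1I) (blast, metis convex_on_negative_zero_unique UNIV_I)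
  then show ?thesis
    unfolding k_def[symmetric] C_def[symmetric] root_iff .
qed

end
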